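(* Suppose actions are chosen by contextual GP-TS-SDF: given $\mathcal{F}_{t-1}$, sample $g_t\sim\mathcal{GP}(\mu_{t-1}(\cdot,\cdot),\nu_t^2\sigma^2_{t-1}(\cdot,\cdot))$ and, for the given context $z_t$, select $x_t\in\arg\max_{x\in\mathcal{Q}}g_t(z_t,x)$. For any filtration $\mathcal{F}_{t-1}$ and given context $z_t$, conditioned on the event $E^f(t)$, $$\mathbb{P}\left(x_t\in\mathcal{Q}\setminus S_t\mid\mathcal{F}_{t-1}\right)\ge p-1/t^2,\qquad p=\frac{1}{4e\sqrt{\pi}}.$$
   Context: Setting (contextual GP bandits with delayed feedback). $\mathcal{Q}\subset\mathbb{R}^n$ finite action set, $\mathcal{Z}\subset\mathbb{R}^{n'}$ finite context set. $k$ a positive semidefinite kernel on $\mathcal{Z}\times\mathcal{Q}$ with $k\le1$; $g$ in its RKHS with $\|g\|_k\le\mathcal{B}_f$. In round $t$ the environment gives a context $z_t$, the learner selects $x_t\in\mathcal{Q}$ and gets $y_t=g(z_t,x_t)+\epsilon_t$ ($R$-sub-Gaussian $\epsilon_t$, $|y_t|\le\mathcal{B}_y$), observed after a random delay $d_t\in\{0,1,\ldots\}$ drawn from $\mathcal{D}$. For an integer $m\ge1$, $\rho_m=\mathbb{P}(d_s\le m)$, $\tilde y_{s,t}=y_s\mathbb{1}\{d_s\le\min(m,t-s)\}$. With $\lambda>0$, $w_i=(z_i,x_i)$, $w=(z,x)$: $\mu_{t-1}(w)=\mathbf{k}_{t-1}(w)^\top(\mathbf{K}_{t-1}+\lambda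 I)^{-1}\tilde{\mathbf{y}}_{t-1}$, $\sigma^2_{t-1}(w,w')=k(w,w')-\mathbf{k}_{t-1}(w)^\top(\mathbf{K}_{t-1}+\lambda I)^{-1}\mathbf{k}_{t-1}(w')$, $\sigma^2_{t-1}(w)=\sigma^2_{t-1}(w,w)$, $\mathbf{k}_{t-1}(w)=(k(w,w_i))_{i\le t-1}$, $\mathbf{K}_{t-1}=(k(w_i,w_j))_{i,j\le t-1}$, $\tilde{\mathbf{y}}_{t-1}=(\tilde y_{s,t})_{s\le t-1}$. $\gamma_t=\max_A\frac12\log\det(I+\lambda^{-1}\mathbf{K}_A)$ over collections of $t$ points of $\mathcal{Z}\times\mathcal{Q}$. For $\delta\in(0,1)$: $\beta_t=\mathcal{B}_f+(R+\mathcal{B}_y)\sqrt{2(\gamma_{t-1}+1+\log(4/\delta))}$, $\nu_t=\mathcal{B}_y\sum_{s=t-m}^{t-1}\sigma_{t-1}(z_s,x_s)+\beta_t$ (terms with $s<1$ omitted), $c_t=\nu_t(1+\sqrt{2\log(|\mathcal{Z}||\mathcal{Q}|t^2)})$. $\mathcal{F}_{t-1}$: history up to round $t-1$. $E^f(t)$: the event that $|\mu_{t-1}(z,x)-\rho_mg(z,x)|\le\nu_t\sigma_{t-1}(z,x)$ for all $z,x$. With $x_t^\star\in\arg\max_{x\in\mathcal{Q}}g(z_t,x)$ and $\Delta(z_t,x)=g(z_t,x_t^\star)-g(z_t,x)$, the saturated set is $S_t=\{x\in\mathcal{Q}:\rho_m\Delta(z_t,x)>c_t\sigma_{t-1}(z_t,x)\}$.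 *)

theory Defs
  imports "HOL-Probability.Probability"
    "Jordan_Normal_Form.Gauss_Jordan_Elimination" "Jordan_Normal_Form.Determinant"
begin

definition psd_kernel :: "('w \<Rightarrow> 'w \<Rightarrow> real) \<Rightarrow> 'w set \<Rightarrow> bool" where
  "psd_kernel k W \<longleftrightarrow>
     (\<forall>w\<in>W. \<forall>w'\<in>W. k w w' = k w' w) \<and>
     (\<forall>ws (c :: nat \<Rightarrow> real). set ws \<subseteq> W \<longrightarrow>
        0 \<le> (\<Sum>i<length ws. \<Sum>j<length ws. c i * c j * k (ws ! i) (ws ! j)))"

text \<open>On a finite domain the RKHS consists of the functions w \<mapsto> sum_u alpha u k(w,u), with
  squared norm alpha^T K alpha (independent of the representation).\<close>
definition rkhs_norm_le :: "('w \<Rightarrow> 'w \<Rightarrow> real) \<Rightarrow> 'w set \<Rightarrow> ('w \<Rightarrow> real) \<Rightarrow> real \<Rightarrow> bool" where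
  "rkhs_norm_le k W f B \<longleftrightarrow>
     (\<exists>\<alpha>::'w \<Rightarrow> real. (\<forall>w\<in>W. f w = (\<Sum>u\<in>W. \<alpha> u * k w u)) \<and>
        sqrt (\<Sum>u\<in>W. \<Sum>v\<in>W. \<alpha> u * \<alpha> v * k u v) \<le> B)"

definition gram :: "('w \<Rightarrow> 'w \<Rightarrow> real) \<Rightarrow> 'w list \<Rightarrow> real mat" where
  "gram k ws = mat (length ws) (length ws) (\<lambda>(i, j). k (ws ! i) (ws ! j))"

definition kvec :: "('w \<Rightarrow> 'w \<Rightarrow> real) \<Rightarrow> 'w list \<Rightarrow> 'w \<Rightarrow> real vec" where
  "kvec k ws w = vec (length ws) (\<lambda>i. k w (ws ! i))"

definition reg_inv :: "('w \<Rightarrow> 'w \<Rightarrow> real) \<Rightarrow> real \<Rightarrow> 'w list \<Rightarrow> real mat" where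
  "reg_inv k lam ws = the (mat_inverse (gram k ws + lam \<cdot>\<^sub>m 1\<^sub>m (length ws)))"

definition post_mean :: "('w \<Rightarrow> 'w \<Rightarrow> real) \<Rightarrow> real \<Rightarrow> 'w list \<Rightarrow> real vec \<Rightarrow> 'w \<Rightarrow> real" where
  "post_mean k lam ws ys w = kvec k ws w \<bullet> (reg_inv k lam ws *\<^sub>v ys)"

definition post_cov :: "('w \<Rightarrow> 'w \<Rightarrow> real) \<Rightarrow> real \<Rightarrow> 'w list \<Rightarrow> 'w \<Rightarrow> 'w \<Rightarrow> real" where
  "post_cov k lam ws w w' = k w w' - kvec k ws w \<bullet> (reg_inv k lam ws *\<^sub>v kvec k ws w')"

definition post_sd :: "('w \<Rightarrow> 'w \<Rightarrow> real) \<Rightarrow> real \<Rightarrow> 'w list \<Rightarrow> 'w \<Rightarrow> real" where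
  "post_sd k lam ws w = sqrt (post_cov k lam ws w w)"

definition max_info_gain :: "('w \<Rightarrow> 'w \<Rightarrow> real) \<Rightarrow> real \<Rightarrow> 'w set \<Rightarrow> nat \<Rightarrow> real" where
  "max_info_gain k lam W t =
     Max {(1/2) * ln (det (1\<^sub>m t + (1 / lam) \<cdot>\<^sub>m gram k A)) | A. set A \<subseteq> W \<and> length A = t}"

definition std_gauss_vec :: "'w set \<Rightarrow> ('w \<Rightarrow> real) measure" where
  "std_gauss_vec W = PiM W (\<lambda>_. density lborel std_normal_density)"


definition ytil :: "(nat \<Rightarrow> real) \<Rightarrow> (nat \<Rightarrow> nat) \<Rightarrow> nat \<Rightarrow> nat \<Rightarrow> nat \<Rightarrow> real" where
  "ytil y d m t s = (if d s \<le> min m (t - s) then y s else 0)"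

text \<open>Vector (ytil_{s,t})_{s = 1..t-1}; entry i corresponds to round s = i + 1.\<close>
definition ytil_vec :: "(nat \<Rightarrow> real) \<Rightarrow> (nat \<Rightarrow> nat) \<Rightarrow> nat \<Rightarrow> nat \<Rightarrow> real vec" where
  "ytil_vec y d m t = vec (t - 1) (\<lambda>i. ytil y d m t (i + 1))"

definition beta_t :: "real \<Rightarrow> real \<Rightarrow> real \<Rightarrow> real \<Rightarrow> real \<Rightarrow> real" where
  "beta_t Bf R By gam \<delta> = Bf + (R + By) * sqrt (2 * (gam + 1 + ln (4 / \<delta>)))"

text \<open>nu_t = By * sum_{s=t-m}^{t-1} sigma_{t-1}(w_s) + beta_t (terms s < 1 omitted);
  the history ws lists w_1, ..., w_{t-1}, so w_s = ws ! (s - 1).\<close>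
definition nu_t :: "real \<Rightarrow> ('w \<Rightarrow> real) \<Rightarrow> 'w list \<Rightarrow> nat \<Rightarrow> nat \<Rightarrow> real \<Rightarrow> real" where
  "nu_t By sd ws m t beta = By * (\<Sum>s\<in>{max 1 (t - m)..t - 1}. sd (ws ! (s - 1))) + beta"

definition c_t :: "real \<Rightarrow> nat \<Rightarrow> nat \<Rightarrow> nat \<Rightarrow> real" where
  "c_t nu nZ nQ t = nu * (1 + sqrt (2 * ln (real nZ * real nQ * (real t)\<^sup>2)))"

definition saturated :: "'q set \<Rightarrow> ('z \<times> 'q \<Rightarrow> real) \<Rightarrow> real \<Rightarrow> real \<Rightarrow> ('z \<times> 'q \<Rightarrow> real) \<Rightarrow> 'z \<Rightarrow> 'q set" where
  "saturated Q g \<rho> c sd zt =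
     {x \<in> Q. \<rho> * (Max ((\<lambda>x'. g (zt, x')) ` Q) - g (zt, x)) > c * sd (zt, x)}"

end

theory Submission
  imports Defs
begin

(* Let x0 be an optimal action in context zt and let s(w) = nu sigma(w) be the standard deviation
   of the sampled value at w. On E^f(t), the sample at (zt, x0) exceeds rho g(zt, x0) as soon as its
   Gaussian fluctuation there is at least one standard deviation, which has probability at least
   phi(2) >= 1/(4 e sqrt pi). By the Gaussian tail bound exp(-r^2/2) and a union bound over Q, with
   r = sqrt(2 ln(|Z| |Q| t^2)) the probability that the fluctuation at some (zt, x) exceeds r s(zt, x)
   is at most 1/t^2. Outside this event, the maximiser x_t of the sample satisfies
   rho g(zt, x0) <= g_t(zt, x_t) <= rho g(zt, x_t) + (1 + r) s(zt, x_t) = rho g(zt, x_t) + c_t sigma(zt, x_t),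
   so x_t is not saturated. *)

lemma std_normal_density_antimono:
  "\<bar>x\<bar> \<le> \<bar>y\<bar> \<Longrightarrow> std_normal_density y \<le> std_normal_density x"
  by (simp add: std_normal_density_def abs_le_square_iff divide_right_mono)

lemma std_normal_density_two_ge: "1 / (4 * exp 1 * sqrt pi) \<le> std_normal_density 2"
proof -
  have "sqrt 2 \<le> (1.42::real)"
    by (rule real_le_lsqrt) (simp_all add: power2_eq_square)
  then have "exp 1 * sqrt 2 \<le> (2.72 * 1.42 :: real)"
    using e_less_272 by (intro mult_mono) auto
  then have "exp 1 * exp 1 * sqrt 2 * sqrt pi \<le> 4 * exp 1 * sqrt pi"
    by (simp add: mult_right_mono)
  moreover have "std_normal_density 2 = 1 / (exp 1 * exp 1 * sqrt 2 * sqrt pi)"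
    by (simp add: std_normal_density_def real_sqrt_mult exp_minus mult_exp_exp field_simps)
  ultimately show ?thesis
    by (simp add: frac_le)
qed

lemma std_normal_prob_atLeast_one_ge:
  "1 / (4 * exp 1 * sqrt pi) \<le> measure std_normal_distribution {1..}"
proof -
  interpret N: prob_space std_normal_distribution by (simp add: prob_space_normal_density)
  have "ennreal (std_normal_density 2)
      = (\<integral>\<^sup>+x. ennreal (std_normal_density 2) * indicator {1..2::real} x \<partial>lborel)"
    by (subst nn_integral_cmult_indicator) auto
  also have "\<dots> \<le> (\<integral>\<^sup>+x. ennreal (std_normal_density x) * indicator {1..} x \<partial>lborel)"
    by (intro nn_integral_mono) (auto simp: indicator_def intro!: std_normal_density_antimono)
  also have "\<dots> = emeasure std_normal_distribution {1..}"
    by (simp add: emeasure_density)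
  finally have "std_normal_density 2 \<le> measure std_normal_distribution {1..}"
    by (simp add: N.emeasure_eq_measure)
  with std_normal_density_two_ge show ?thesis
    by linarith
qed

lemma std_normal_density_tendsto_zero: "(std_normal_density \<longlongrightarrow> 0) at_top"
proof -
  have "filterlim (\<lambda>x::real. x\<^sup>2 * (1 / 2)) at_top at_top"
    by (intro filterlim_at_top_mult_tendsto_pos[OF tendsto_const] filterlim_pow_at_top filterlim_ident)
      simp_all
  then have "filterlim (\<lambda>x::real. - x\<^sup>2 / 2) at_bot at_top"
    by (simp add: filterlim_uminus_at_top)
  then have "((\<lambda>x::real. exp (- x\<^sup>2 / 2)) \<longlongrightarrow> 0) at_top"
    by (rule filterlim_compose[OF exp_at_bot])
  then show ?thesis
    unfolding std_normal_density_def[abs_def] by (rule tendsto_mult_right_zero)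
qed

lemma std_normal_prob_greaterThan_le:
  assumes "1 \<le> a"
  shows "measure std_normal_distribution {a<..} \<le> exp (- a\<^sup>2 / 2)"
proof -
  interpret N: prob_space std_normal_distribution by (simp add: prob_space_normal_density)
  have "emeasure std_normal_distribution {a<..}
      = (\<integral>\<^sup>+x. ennreal (std_normal_density x) * indicator {a<..} x \<partial>lborel)"
    by (simp add: emeasure_density)
  \<comment> \<open>on \<open>[1, \<infinity>)\<close> the density is dominated by \<open>x \<phi>(x)\<close>, whose antiderivative is \<open>-\<phi>\<close>\<close>
  also have "\<dots> \<le> (\<integral>\<^sup>+x. ennreal (x * std_normal_density x) * indicator {a..} x \<partial>lborel)"
    using assms
    by (intro nn_integral_mono)
      (auto simp: indicator_def mult_le_cancel_right1 leD[OF normal_density_nonneg])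
  also have "\<dots> = ennreal (0 - - std_normal_density a)"
  proof (rule nn_integral_FTC_atLeast)
    show "DERIV (\<lambda>x. - std_normal_density x) x :> x * std_normal_density x" for x
      unfolding std_normal_density_def
      by (auto intro!: derivative_eq_intros simp: field_simps power2_eq_square)
    show "((\<lambda>x. - std_normal_density x) \<longlongrightarrow> 0) at_top"
      using tendsto_minus[OF std_normal_density_tendsto_zero] by simp
  qed (use assms in auto)
  also have "\<dots> \<le> ennreal (exp (- a\<^sup>2 / 2))"
  proof (intro ennreal_leI)
    have "1 \<le> sqrt (2 * pi)"
      using pi_gt3 by (simp add: real_le_rsqrt)
    then show "0 - - std_normal_density a \<le> exp (- a\<^sup>2 / 2)"
      by (simp add: std_normal_density_def divide_le_eq mult_le_cancel_left1)
  qed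
  finally show ?thesis
    by (simp add: N.emeasure_eq_measure)
qed

lemma prob_space_std_gauss_vec: "prob_space (std_gauss_vec W)"
  unfolding std_gauss_vec_def by (rule prob_space_PiM) (simp add: prob_space_normal_density)

lemma distr_std_gauss_vec_component:
  assumes "i \<in> W"
  shows "distr (std_gauss_vec W) lborel (\<lambda>\<xi>. \<xi> i) = std_normal_distribution"
proof -
  have "distr (std_gauss_vec W) lborel (\<lambda>\<xi>. \<xi> i)
      = distr (std_gauss_vec W) std_normal_distribution (\<lambda>\<xi>. \<xi> i)"
    by (rule distr_cong) auto
  also have "\<dots> = std_normal_distribution"
    unfolding std_gauss_vec_def
    by (rule distr_PiM_component[OF _ assms]) (simp add: prob_space_normal_density)
  finally show ?thesis .
qed

lemma distributed_std_gauss_vec_component: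
  assumes "i \<in> W"
  shows "distributed (std_gauss_vec W) lborel (\<lambda>\<xi>. \<xi> i) std_normal_density"
  unfolding distributed_def using distr_std_gauss_vec_component[OF assms] assms
  by (auto simp: std_gauss_vec_def)

lemma indep_vars_std_gauss_vec_components:
  assumes "W \<noteq> {}"
  shows "prob_space.indep_vars (std_gauss_vec W) (\<lambda>_. borel) (\<lambda>u \<xi>. \<xi> u) W"
proof -
  let ?M = "std_gauss_vec W"
  interpret prob_space ?M by (rule prob_space_std_gauss_vec)
  have restrict: "(\<lambda>i\<in>W. \<xi> i) = \<xi>" if "\<xi> \<in> space ?M" for \<xi>
    using that by (simp add: std_gauss_vec_def space_PiM PiE_def extensional_restrict)
  have "sets (PiM W (\<lambda>_. borel)) = sets ?M"
    unfolding std_gauss_vec_def by (rule sets_PiM_cong) simp_all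
  then have "distr ?M (PiM W (\<lambda>_. borel)) (\<lambda>\<xi>. \<lambda>i\<in>W. \<xi> i) = distr ?M ?M (\<lambda>\<xi>. \<xi>)"
    by (rule distr_cong[OF refl _ restrict])
  also have "\<dots> = PiM W (\<lambda>_. std_normal_distribution)"
    by (simp add: distr_id std_gauss_vec_def)
  also have "\<dots> = PiM W (\<lambda>i. distr ?M borel (\<lambda>\<xi>. \<xi> i))"
  proof (rule PiM_cong)
    fix i assume "i \<in> W"
    have "distr ?M borel (\<lambda>\<xi>. \<xi> i) = distr ?M lborel (\<lambda>\<xi>. \<xi> i)"
      by (rule distr_cong) simp_all
    then show "std_normal_distribution = distr ?M borel (\<lambda>\<xi>. \<xi> i)"
      using distr_std_gauss_vec_component[OF \<open>i \<in> W\<close>] by simp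
  qed simp
  finally show ?thesis
    by (subst indep_vars_iff_distr_eq_PiM'[OF assms]) (simp_all add: std_gauss_vec_def)
qed

lemma distributed_std_gauss_vec_linear:
  assumes W: "finite W" and pos: "0 < (\<Sum>u\<in>W. (c u)\<^sup>2)"
  shows "distributed (std_gauss_vec W) lborel (\<lambda>\<xi>. \<Sum>u\<in>W. c u * \<xi> u)
           (normal_density 0 (sqrt (\<Sum>u\<in>W. (c u)\<^sup>2)))"
proof -
  interpret prob_space "std_gauss_vec W" by (rule prob_space_std_gauss_vec)
  \<comment> \<open>\<open>sum_indep_normal\<close> needs positive standard deviations, so drop the \<open>u\<close> with \<open>c u = 0\<close>\<close>
  define I where "I = {u\<in>W. c u \<noteq> 0}"
  have I: "I \<subseteq> W" "finite I" using W by (auto simp: I_def)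
  have sum_I: "(\<Sum>u\<in>I. f u) = (\<Sum>u\<in>W. f u)" if "\<forall>u\<in>W - I. f u = 0"
    for f :: "_ \<Rightarrow> real"
    using that W I by (intro sum.mono_neutral_left) auto
  have var: "(\<Sum>u\<in>I. (c u)\<^sup>2) = (\<Sum>u\<in>W. (c u)\<^sup>2)"
    by (rule sum_I) (simp add: I_def)
  then have "I \<noteq> {}"
    using pos by auto
  moreover have "indep_vars (\<lambda>_. borel) (\<lambda>u \<xi>. c u * \<xi> u) I"
    using I \<open>I \<noteq> {}\<close>
    by (intro indep_vars_compose2[OF indep_vars_subset[OF indep_vars_std_gauss_vec_components]]) auto
  moreover have "distributed (std_gauss_vec W) lborel (\<lambda>\<xi>. c u * \<xi> u)
      (normal_density 0 \<bar>c u\<bar>)" if "u \<in> I" for u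
  proof -
    have u: "u \<in> W" "c u \<noteq> 0" using that by (auto simp: I_def)
    show ?thesis
      using normal_density_affine[OF distributed_std_gauss_vec_component[OF u(1)],
          where \<alpha> = "c u" and \<beta> = 0] u(2)
      by simp
  qed
  ultimately have "distributed (std_gauss_vec W) lborel (\<lambda>\<xi>. \<Sum>u\<in>I. c u * \<xi> u)
      (normal_density (\<Sum>u\<in>I. 0) (sqrt (\<Sum>u\<in>I. \<bar>c u\<bar>\<^sup>2)))"
    using I by (intro sum_indep_normal) (auto simp: I_def)
  moreover have "(\<Sum>u\<in>I. c u * \<xi> u) = (\<Sum>u\<in>W. c u * \<xi> u)" for \<xi> :: "_ \<Rightarrow> real"
    by (rule sum_I) (simp add: I_def)
  ultimately show ?thesis
    using var by simp
qed

lemma prob_std_gauss_vec_linear_normalized: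
  assumes W: "finite W" and pos: "0 < (\<Sum>u\<in>W. (c u)\<^sup>2)" and A: "A \<in> sets borel"
  shows "measure (std_gauss_vec W)
           {\<xi> \<in> space (std_gauss_vec W). (\<Sum>u\<in>W. c u * \<xi> u) / sqrt (\<Sum>u\<in>W. (c u)\<^sup>2) \<in> A}
         = measure std_normal_distribution A"
proof -
  interpret prob_space "std_gauss_vec W" by (rule prob_space_std_gauss_vec)
  let ?X = "\<lambda>\<xi>. (\<Sum>u\<in>W. c u * \<xi> u) / sqrt (\<Sum>u\<in>W. (c u)\<^sup>2)"
  have "distributed (std_gauss_vec W) lborel
          (\<lambda>\<xi>. ((\<Sum>u\<in>W. c u * \<xi> u) - 0) / sqrt (\<Sum>u\<in>W. (c u)\<^sup>2)) std_normal_density"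
    using pos
    by (subst normal_standard_normal_convert[symmetric])
      (simp_all add: distributed_std_gauss_vec_linear W)
  then have X: "distributed (std_gauss_vec W) lborel ?X std_normal_density"
    by simp
  have "measure std_normal_distribution A = measure (distr (std_gauss_vec W) lborel ?X) A"
    by (simp add: distributed_distr_eq_density[OF X])
  also have "\<dots> = measure (std_gauss_vec W) (?X -` A \<inter> space (std_gauss_vec W))"
    using A distributed_measurable[OF X] by (simp add: measure_distr)
  finally show ?thesis
    by (simp add: vimage_def Int_def conj_commute)
qed

lemma linear_form_eq_zero_if_variance_zero:
  fixes c \<xi> :: "'w \<Rightarrow> real"
  assumes "finite W" "(\<Sum>u\<in>W. (c u)\<^sup>2) = 0"
  shows "(\<Sum>u\<in>W. c u * \<xi> u) = 0"
proof -
  have "\<forall>u\<in>W. (c u)\<^sup>2 = 0"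
    using assms sum_nonneg_eq_0_iff[of W "\<lambda>u. (c u)\<^sup>2"] by simp
  then show ?thesis
    by simp
qed

lemma std_gauss_vec_linear_lower_tail:
  assumes W: "finite W"
  shows "1 / (4 * exp 1 * sqrt pi) \<le> measure (std_gauss_vec W)
           {\<xi> \<in> space (std_gauss_vec W). sqrt (\<Sum>u\<in>W. (c u)\<^sup>2) \<le> (\<Sum>u\<in>W. c u * \<xi> u)}"
proof (cases "(\<Sum>u\<in>W. (c u)\<^sup>2) = 0")
  case True
  interpret prob_space "std_gauss_vec W" by (rule prob_space_std_gauss_vec)
  interpret N: prob_space std_normal_distribution by (simp add: prob_space_normal_density)
  have "1 / (4 * exp 1 * sqrt pi) \<le> 1"
    using std_normal_prob_atLeast_one_ge N.prob_le_1 by (rule order_trans)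
  then show ?thesis
    using True linear_form_eq_zero_if_variance_zero[OF W True] by (simp add: prob_space)
next
  case False
  then have pos: "0 < (\<Sum>u\<in>W. (c u)\<^sup>2)"
    by (simp add: order_less_le sum_nonneg)
  then show ?thesis
    using prob_std_gauss_vec_linear_normalized[OF W pos, of "{1..}"] std_normal_prob_atLeast_one_ge
    by (simp add: le_divide_eq_1_pos)
qed

lemma std_gauss_vec_linear_upper_tail:
  assumes W: "finite W" and a: "1 \<le> a"
  shows "measure (std_gauss_vec W)
           {\<xi> \<in> space (std_gauss_vec W). a * sqrt (\<Sum>u\<in>W. (c u)\<^sup>2) < (\<Sum>u\<in>W. c u * \<xi> u)}
         \<le> exp (- a\<^sup>2 / 2)"
proof (cases "(\<Sum>u\<in>W. (c u)\<^sup>2) = 0")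
  case True
  then show ?thesis
    using linear_form_eq_zero_if_variance_zero[OF W True] by simp
next
  case False
  then have pos: "0 < (\<Sum>u\<in>W. (c u)\<^sup>2)"
    by (simp add: order_less_le sum_nonneg)
  then show ?thesis
    using prob_std_gauss_vec_linear_normalized[OF W pos, of "{a<..}"] std_normal_prob_greaterThan_le[OF a]
    by (simp add: pos_less_divide_eq)
qed

lemma not_saturated_if_optimistic:
  assumes "\<rho> * Max ((\<lambda>x'. g (zt, x')) ` Q) \<le> \<rho> * g (zt, x) + c * sd (zt, x)"
  shows "x \<notin> saturated Q g \<rho> c sd zt"
  using assms by (simp add: saturated_def right_diff_distrib)

lemma prob_sampled_argmax_not_saturated:
  fixes W :: "('z \<times> 'q) set" and \<mu> :: "'z \<times> 'q \<Rightarrow> real"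
    and L :: "'z \<times> 'q \<Rightarrow> 'z \<times> 'q \<Rightarrow> real"
    and sel :: "('z \<times> 'q \<Rightarrow> real) \<Rightarrow> 'q"
  defines "sample \<xi> \<equiv> \<lambda>w. \<mu> w + (\<Sum>u\<in>W. L w u * \<xi> u)"
    and "s w \<equiv> sqrt (\<Sum>u\<in>W. (L w u)\<^sup>2)"
  assumes W: "finite W" "{zt} \<times> Q \<subseteq> W" and Q: "finite Q" "Q \<noteq> {}"
    and conf: "\<forall>x\<in>Q. \<bar>\<mu> (zt, x) - \<rho> * g (zt, x)\<bar> \<le> s (zt, x)"
    and width: "\<forall>x\<in>Q. (1 + r) * s (zt, x) \<le> c * sd (zt, x)"
    and r: "1 \<le> r"
    and sel: "\<forall>h. sel h \<in> Q \<and> (\<forall>x\<in>Q. h (zt, x) \<le> h (zt, sel h))"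
    and sel_meas: "(\<lambda>\<xi>. sel (sample \<xi>)) \<in> std_gauss_vec W \<rightarrow>\<^sub>M count_space UNIV"
  shows "1 / (4 * exp 1 * sqrt pi) - card Q * exp (- r\<^sup>2 / 2)
         \<le> measure (std_gauss_vec W)
              {\<xi> \<in> space (std_gauss_vec W). sel (sample \<xi>) \<in> Q - saturated Q g \<rho> c sd zt}"
proof -
  let ?M = "std_gauss_vec W"
  let ?T = "{\<xi> \<in> space ?M. sel (sample \<xi>) \<in> Q - saturated Q g \<rho> c sd zt}"
  interpret prob_space ?M by (rule prob_space_std_gauss_vec)
  have "Max ((\<lambda>x. g (zt, x)) ` Q) \<in> (\<lambda>x. g (zt, x)) ` Q"
    using Q by (simp add: Max_in)
  then obtain x0 where x0: "Max ((\<lambda>x. g (zt, x)) ` Q) = g (zt, x0)" "x0 \<in> Q"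
    by (rule imageE)
  define optimistic
    where "optimistic = {\<xi> \<in> space ?M. s (zt, x0) \<le> (\<Sum>u\<in>W. L (zt, x0) u * \<xi> u)}"
  define large_dev
    where "large_dev x = {\<xi> \<in> space ?M. r * s (zt, x) < (\<Sum>u\<in>W. L (zt, x) u * \<xi> u)}" for x
  have event_sets: "optimistic \<in> sets ?M" "large_dev x \<in> sets ?M" for x
    unfolding optimistic_def large_dev_def std_gauss_vec_def by measurable
  have "?T = (\<lambda>\<xi>. sel (sample \<xi>)) -` (Q - saturated Q g \<rho> c sd zt) \<inter> space ?M"
    by auto
  then have T_sets: "?T \<in> sets ?M"
    using measurable_sets[OF sel_meas] by simp
  have "optimistic \<subseteq> ?T \<union> (\<Union>x\<in>Q. large_dev x)"
  proof
    fix \<xi> assume "\<xi> \<in> optimistic"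
    define x where "x = sel (sample \<xi>)"
    have x: "x \<in> Q" and x_max: "sample \<xi> (zt, x0) \<le> sample \<xi> (zt, x)"
      using sel x0(2) unfolding x_def by blast+
    show "\<xi> \<in> ?T \<union> (\<Union>x\<in>Q. large_dev x)"
    proof (cases "\<xi> \<in> large_dev x")
      case True
      then show ?thesis using x by blast
    next
      case False
      have "\<rho> * Max ((\<lambda>x'. g (zt, x')) ` Q) \<le> sample \<xi> (zt, x0)"
      proof -
        have "\<rho> * g (zt, x0) - s (zt, x0) \<le> \<mu> (zt, x0)"
          using conf x0(2) by (auto simp: abs_le_iff)
        moreover have "s (zt, x0) \<le> (\<Sum>u\<in>W. L (zt, x0) u * \<xi> u)"
          using \<open>\<xi> \<in> optimistic\<close> by (simp add: optimistic_def)
        ultimately show ?thesis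
          using x0(1) by (simp add: sample_def)
      qed
      also have "\<dots> \<le> sample \<xi> (zt, x)"
        by (rule x_max)
      also have "\<dots> \<le> \<rho> * g (zt, x) + c * sd (zt, x)"
      proof -
        have "\<mu> (zt, x) \<le> \<rho> * g (zt, x) + s (zt, x)"
          using conf x by (auto simp: abs_le_iff)
        moreover have "(\<Sum>u\<in>W. L (zt, x) u * \<xi> u) \<le> r * s (zt, x)"
          using False \<open>\<xi> \<in> optimistic\<close> by (simp add: optimistic_def large_dev_def not_less)
        moreover have "(1 + r) * s (zt, x) \<le> c * sd (zt, x)"
          using width x by blast
        ultimately show ?thesis
          by (simp add: sample_def algebra_simps)
      qed
      finally have "x \<notin> saturated Q g \<rho> c sd zt"
        by (rule not_saturated_if_optimistic)
      then show ?thesis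
        using x \<open>\<xi> \<in> optimistic\<close> by (simp add: optimistic_def x_def)
    qed
  qed
  moreover have UN: "(\<Union>x\<in>Q. large_dev x) \<in> sets ?M"
    using Q(1) event_sets(2) by (intro sets.finite_UN) auto
  ultimately have "prob optimistic \<le> prob (?T \<union> (\<Union>x\<in>Q. large_dev x))"
    using T_sets by (intro finite_measure_mono sets.Un)
  also have "\<dots> \<le> prob ?T + prob (\<Union>x\<in>Q. large_dev x)"
    using T_sets UN by (rule measure_Un_le)
  finally have "prob optimistic \<le> prob ?T + prob (\<Union>x\<in>Q. large_dev x)" .
  moreover have "prob (\<Union>x\<in>Q. large_dev x) \<le> (\<Sum>x\<in>Q. prob (large_dev x))"
    using Q(1) event_sets(2) by (intro finite_measure_subadditive_finite) auto
  moreover have "(\<Sum>x\<in>Q. prob (large_dev x)) \<le> (\<Sum>x\<in>Q. exp (- r\<^sup>2 / 2))"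
    unfolding large_dev_def s_def by (intro sum_mono std_gauss_vec_linear_upper_tail W r)
  moreover have "1 / (4 * exp 1 * sqrt pi) \<le> prob optimistic"
    unfolding optimistic_def s_def by (rule std_gauss_vec_linear_lower_tail[OF W(1)])
  ultimately show ?thesis
    by simp
qed

lemma mult_sqrt_eq_sqrt_power2_mult:
  fixes a b :: real
  assumes "0 \<le> a * sqrt b" and "0 \<le> a\<^sup>2 * b"
  shows "a * sqrt b = sqrt (a\<^sup>2 * b)"
proof (cases "a < 0")
  case True
  then have "0 \<le> b"
    using assms(2) by (simp add: zero_le_mult_iff)
  then have "sqrt b = 0"
    using True assms(1) by (simp add: zero_le_mult_iff)
  then show ?thesis
    by (simp add: real_sqrt_mult)
next
  case False
  then show ?thesis
    by (simp add: real_sqrt_mult)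
qed

lemma sqrt_two_ln_union_bound:
  fixes a b t :: nat
  assumes "1 \<le> a" "1 \<le> b" "2 \<le> t"
  defines "r \<equiv> sqrt (2 * ln (real a * real b * (real t)\<^sup>2))"
  shows "1 \<le> r" and "real b * exp (- r\<^sup>2 / 2) \<le> 1 / (real t)\<^sup>2"
proof -
  define N where "N = real a * real b * (real t)\<^sup>2"
  have "1 * 1 * 2\<^sup>2 \<le> N"
    unfolding N_def using assms(1-3) by (intro mult_mono power_mono) auto
  then have ln_N: "1 \<le> ln N"
    using exp_le by (subst ln_ge_iff) auto
  then show "1 \<le> r"
    by (simp add: r_def N_def[symmetric] real_le_rsqrt)
  have "real b * exp (- r\<^sup>2 / 2) = 1 / (real a * (real t)\<^sup>2)"
    using ln_N \<open>1 * 1 * 2\<^sup>2 \<le> N\<close> assms(2)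
    by (simp add: r_def N_def[symmetric] exp_minus exp_ln inverse_eq_divide) (simp add: N_def)
  also have "\<dots> \<le> 1 / (real t)\<^sup>2"
    using assms by (intro divide_left_mono) auto
  finally show "real b * exp (- r\<^sup>2 / 2) \<le> 1 / (real t)\<^sup>2" .
qed

theorem lemma10:
  fixes Z :: "(real ^ 'n2) set" and Q :: "(real ^ 'n1) set"
    and k :: "((real ^ 'n2) \<times> (real ^ 'n1)) \<Rightarrow> ((real ^ 'n2) \<times> (real ^ 'n1)) \<Rightarrow> real"
    and g :: "((real ^ 'n2) \<times> (real ^ 'n1)) \<Rightarrow> real"
    and Bf By R lam \<delta> :: real
    and D :: "nat pmf" and m t :: nat
    and ws :: "((real ^ 'n2) \<times> (real ^ 'n1)) list"
    and y :: "nat \<Rightarrow> real" and d :: "nat \<Rightarrow> nat"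
    and zt :: "real ^ 'n2"
    and L :: "((real ^ 'n2) \<times> (real ^ 'n1)) \<Rightarrow> ((real ^ 'n2) \<times> (real ^ 'n1)) \<Rightarrow> real"
    and sel :: "(((real ^ 'n2) \<times> (real ^ 'n1)) \<Rightarrow> real) \<Rightarrow> real ^ 'n1"
  defines "\<rho> \<equiv> measure_pmf.prob D {..m}"
    and "\<mu> \<equiv> post_mean k lam ws (ytil_vec y d m t)"
    and "\<sigma> \<equiv> post_sd k lam ws"
    and "\<nu> \<equiv> nu_t By (post_sd k lam ws) ws m t
               (beta_t Bf R By (max_info_gain k lam (Z \<times> Q) (t - 1)) \<delta>)"
  assumes Z: "finite Z" "Z \<noteq> {}" and Q: "finite Q" "Q \<noteq> {}"
    and kern: "psd_kernel k (Z \<times> Q)" "\<forall>w\<in>Z \<times> Q. \<forall>w'\<in>Z \<times> Q. k w w' \<le> 1"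
    and g: "rkhs_norm_le k (Z \<times> Q) g Bf"
    and params: "lam > 0" "0 < \<delta>" "\<delta> < 1" "R \<ge> 0" "m \<ge> 1" "t \<ge> 1"
    and hist: "length ws = t - 1" "set ws \<subseteq> Z \<times> Q" "\<forall>s. \<bar>y s\<bar> \<le> By"
    and ctx: "zt \<in> Z"
    and Ef: "\<forall>z\<in>Z. \<forall>x\<in>Q. \<bar>\<mu> (z, x) - \<rho> * g (z, x)\<bar> \<le> \<nu> * \<sigma> (z, x)"
    and cov: "\<forall>w\<in>Z \<times> Q. \<forall>w'\<in>Z \<times> Q.
                (\<Sum>u\<in>Z \<times> Q. L w u * L w' u) = \<nu>\<^sup>2 * post_cov k lam ws w w'"
    and sel: "\<forall>h. sel h \<in> Q \<and> (\<forall>x\<in>Q. h (zt, x) \<le> h (zt, sel h))"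
    and sel_meas: "(\<lambda>\<xi>. sel (\<lambda>w. \<mu> w + (\<Sum>u\<in>Z \<times> Q. L w u * \<xi> u)))
                     \<in> std_gauss_vec (Z \<times> Q) \<rightarrow>\<^sub>M count_space UNIV"
  shows "measure (std_gauss_vec (Z \<times> Q))
           {\<xi> \<in> space (std_gauss_vec (Z \<times> Q)).
              sel (\<lambda>w. \<mu> w + (\<Sum>u\<in>Z \<times> Q. L w u * \<xi> u))
                \<in> Q - saturated Q g \<rho> (c_t \<nu> (card Z) (card Q) t) \<sigma> zt}
         \<ge> 1 / (4 * exp 1 * sqrt pi) - 1 / (real t)\<^sup>2"
proof (cases "t = 1")
  case True
  have "1 \<le> exp (1::real)" "1 \<le> sqrt pi"
    using pi_gt3 by simp_all
  then have "1 \<le> 4 * exp 1 * sqrt pi"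
    using mult_mono[of 1 "exp 1" 1 "sqrt pi"] by simp
  then show ?thesis
    using True by (simp add: order_trans[OF _ measure_nonneg])
next
  case False
  define r where "r = sqrt (2 * ln (real (card Z) * real (card Q) * (real t)\<^sup>2))"
  have r: "1 \<le> r" "card Q * exp (- r\<^sup>2 / 2) \<le> 1 / (real t)\<^sup>2"
    using sqrt_two_ln_union_bound[of "card Z" "card Q" t] Z Q False params(6)
    by (simp_all add: r_def Suc_le_eq card_gt_0_iff)
  have sd: "\<nu> * \<sigma> w = sqrt (\<Sum>u\<in>Z \<times> Q. (L w u)\<^sup>2)" if "w \<in> Z \<times> Q" for w
  proof -
    have "0 \<le> \<nu> * \<sigma> w"
      using Ef that by (auto intro: order_trans[OF abs_ge_zero])
    moreover have "(\<Sum>u\<in>Z \<times> Q. (L w u)\<^sup>2) = \<nu>\<^sup>2 * post_cov k lam ws w w"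
      using cov[rule_format, OF that that] by (simp add: power2_eq_square)
    ultimately show ?thesis
      unfolding \<sigma>_def post_sd_def by (metis mult_sqrt_eq_sqrt_power2_mult sum_nonneg zero_le_power2)
  qed
  show ?thesis
  proof (rule order_trans[OF _ prob_sampled_argmax_not_saturated[where r = r]])
    show "\<forall>x\<in>Q. \<bar>\<mu> (zt, x) - \<rho> * g (zt, x)\<bar> \<le> sqrt (\<Sum>u\<in>Z \<times> Q. (L (zt, x) u)\<^sup>2)"
      using Ef ctx sd by auto
    show "\<forall>x\<in>Q. (1 + r) * sqrt (\<Sum>u\<in>Z \<times> Q. (L (zt, x) u)\<^sup>2)
                \<le> c_t \<nu> (card Z) (card Q) t * \<sigma> (zt, x)"
      using ctx sd[symmetric] by (simp add: c_t_def r_def mult_ac)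
  qed (use Z Q ctx sel sel_meas r in auto)
qed

end
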